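(* Let $f$ be proper lower semicontinuous with the K\L{} property at $x^*$ with desingularizing function $\varphi:[0,\eta[\to[0,\infty[$, the K\L{} inequality holding on $\Gamma_\eta(x^*,\delta)$. Let $(x^k)$ satisfy $\mathbf{H}_1$, $\mathbf{H}_2$, $\mathbf{H}_3$, put $M=\sup_{k\ge1}\frac1{a_kb_k}$, and assume $\mathbf{S}(x^*,\delta,\rho)$ holds. Then for all $K\ge1$, $x^K\in\underline{\Gamma}_\eta(x^*,\rho)$ and $$\sum_{k=1}^K\|x^{k+1}-x^k\|+\|x^{K+1}-x^K\|\le\|x^1-x^0\|+M\big[\varphi(f(x^1)-f(x^* ))-\varphi(f(x^{K+1})-f(x^* ))\big]+\sum_{k=1}^K\varepsilon_k.$$
   Context: $\partial f$ limiting Fréchet subdifferential, lazy slope $\|\partial f(x)\|_-=\inf_{p\in\partial f(x)}\|p\|$. K\L{} inequality on $\Gamma_\eta(x^*,\delta)=\{x:\|x-x^*\|<\delta,\ f(x^* )<f(x)<f(x^* )+\eta\}$: $\varphi'(f(x)-f(x^* ))\|\partial f(x)\|_-\ge1$, with $\varphi$ continuous concave, $\varphi(0)=0$, $C^1$ with $\varphi'>0$ on $]0,\eta[$. $\underline{\Gamma}_\eta(x^*,r)=\{x:\|x-x^*\|<r,\ f(x^* )\le f(x)<f(x^* )+\eta\}$, $\Gamma_\eta(x^*,r)$ the same with strict inequality $f(x^* )<f(x)$. $\mathbf{H}_1$: $f(x^{k+1})+a_k\|x^{k+1}-x^k\|^2\le f(x^k)$, $a_k>0$. $\mathbf{H}_2$: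 $b_{k+1}\|\partial f(x^{k+1})\|_-\le\|x^{k+1}-x^k\|+\varepsilon_{k+1}$, $b_{k+1}>0$, $\varepsilon_{k+1}\ge0$. $\mathbf{H}_3$: (i) $a_k\ge\underline a>0$; (ii) $(b_k)\notin\ell^1$; (iii) $M<\infty$; (iv) $(\varepsilon_k)\in\ell^1$. $\mathbf{S}(x^*,\delta,\rho)$: $\delta>\rho>0$ and (i) for each $k$, if $x^0,\dots,x^k\in\underline{\Gamma}_\eta(x^*,\rho)$ then $x^{k+1}\in\underline{\Gamma}_\eta(x^*,\delta)$; (ii) $x^0\in\Gamma_\eta(x^*,\rho)$ and $\|x^*-x^0\|+2\sqrt{\frac{f(x^0)-f(x^* )}{a_0}}+M\varphi(f(x^0)-f(x^* ))+\sum_{i=1}^\infty\varepsilon_i<\rho$. *)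

theory Defs
  imports "HOL-Analysis.Analysis"
begin

definition proper_fun :: "('a \<Rightarrow> ereal) \<Rightarrow> bool" where
  "proper_fun f \<longleftrightarrow> (\<forall>x. f x \<noteq> -\<infinity>) \<and> (\<exists>x. f x \<noteq> \<infinity>)"

definition lsc_fun :: "('a::topological_space \<Rightarrow> ereal) \<Rightarrow> bool" where
  "lsc_fun f \<longleftrightarrow> (\<forall>c::ereal. closed {x. f x \<le> c})"

text \<open>Frechet subdifferential (written out via its epsilon-delta form of the liminf condition).\<close>
definition frechet_subdiff :: "('a::real_inner \<Rightarrow> ereal) \<Rightarrow> 'a \<Rightarrow> 'a set" where
  "frechet_subdiff f x = {p. \<bar>f x\<bar> \<noteq> \<infinity> \<and>
     (\<forall>e>0. \<exists>d>0. \<forall>y. norm (y - x) < d \<longrightarrow>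
        ereal (real_of_ereal (f x) + inner p (y - x) - e * norm (y - x)) \<le> f y)}"

definition limiting_subdiff :: "('a::real_inner \<Rightarrow> ereal) \<Rightarrow> 'a \<Rightarrow> 'a set" where
  "limiting_subdiff f x = {p. \<bar>f x\<bar> \<noteq> \<infinity> \<and>
     (\<exists>xs ps. xs \<longlonglongrightarrow> x \<and> (\<lambda>n. f (xs n)) \<longlonglongrightarrow> f x \<and>
        (\<forall>n. ps n \<in> frechet_subdiff f (xs n)) \<and> ps \<longlonglongrightarrow> p)}"

text \<open>Lazy slope; equals +\<infinity> when the subdifferential is empty.\<close>
definition lazy_slope :: "('a::real_inner \<Rightarrow> ereal) \<Rightarrow> 'a \<Rightarrow> ereal" where
  "lazy_slope f x = (INF p\<in>limiting_subdiff f x. ereal (norm p))"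

definition Gamma_set :: "('a::real_normed_vector \<Rightarrow> ereal) \<Rightarrow> 'a \<Rightarrow> real \<Rightarrow> real \<Rightarrow> 'a set" where
  "Gamma_set f xs eta r = {x. norm (x - xs) < r \<and> f xs < f x \<and> f x < f xs + ereal eta}"

definition Gamma_under :: "('a::real_normed_vector \<Rightarrow> ereal) \<Rightarrow> 'a \<Rightarrow> real \<Rightarrow> real \<Rightarrow> 'a set" where
  "Gamma_under f xs eta r = {x. norm (x - xs) < r \<and> f xs \<le> f x \<and> f x < f xs + ereal eta}"

definition desing :: "real \<Rightarrow> (real \<Rightarrow> real) \<Rightarrow> (real \<Rightarrow> real) \<Rightarrow> bool" where
  "desing eta phi dphi \<longleftrightarrow> 0 < eta \<and> continuous_on {0..<eta} phi \<and> concave_on {0..<eta} phi \<and>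
     phi 0 = 0 \<and> (\<forall>s\<ge>0. s < eta \<longrightarrow> phi s \<ge> 0) \<and>
     (\<forall>s. 0 < s \<and> s < eta \<longrightarrow> (phi has_real_derivative dphi s) (at s) \<and> dphi s > 0) \<and>
     continuous_on {0<..<eta} dphi"

definition KL_at :: "('a::real_inner \<Rightarrow> ereal) \<Rightarrow> 'a \<Rightarrow> real \<Rightarrow> real \<Rightarrow> (real \<Rightarrow> real) \<Rightarrow> (real \<Rightarrow> real) \<Rightarrow> bool" where
  "KL_at f xs eta delta phi dphi \<longleftrightarrow> \<bar>f xs\<bar> \<noteq> \<infinity> \<and> desing eta phi dphi \<and>
     (\<forall>x\<in>Gamma_set f xs eta delta.
        ereal (dphi (real_of_ereal (f x) - real_of_ereal (f xs))) * lazy_slope f x \<ge> 1)"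

end

theory Submission imports Defs begin

(*
  Write r k = f(x k) - f(xs) for the gap and D k = |x(k+1) - x k| for the step.
  The heart is a one-step inequality: while x(k+1) stays in the KL region,
  H2 and the KL inequality bound b(k+1) by (D k + eps(k+1)) * phi'(r(k+1)),
  concavity of phi and H1 bound a(k+1) * D(k+1)^2 by phi(r(k+1)) - phi(r(k+2))
  divided by phi'(r(k+1)); the arithmetic-geometric mean inequality then gives
    2 D(k+1) <= D k + M (phi(r(k+1)) - phi(r(k+2))) + eps(k+1).
  Summing telescopes the phi terms.  Induction on K shows simultaneously that
  the iterates never leave the ball of radius rho: the telescoped bound plus
  the triangle inequality keeps |x K - xs| below the quantity in S(ii).
*)

lemma desing_deriv_pos:
  assumes "desing eta phi dphi" "0 < t" "t < eta"
  shows "(phi has_real_derivative dphi t) (at t)" "dphi t > 0"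
  using assms unfolding desing_def by blast+

lemma desing_nonneg:
  assumes "desing eta phi dphi" "0 \<le> t" "t < eta"
  shows "phi t \<ge> 0"
  using assms unfolding desing_def by blast

text \<open>A concave function lies below its tangent lines.\<close>

lemma desing_tangent:
  assumes ds: "desing eta phi dphi" and r: "0 < r" "r < eta" and s: "0 \<le> s" "s < eta"
  shows "phi s \<le> phi r + dphi r * (s - r)"
proof -
  have cvx: "convex_on {0..<eta} (\<lambda>t. - phi t)"
    using ds by (simp add: desing_def concave_on_def)
  have deriv: "((\<lambda>t. - phi t) has_real_derivative - dphi r) (at r within {0..<eta})"
    using DERIV_minus[OF desing_deriv_pos(1)[OF ds r]] by (rule has_field_derivative_at_within)
  have "r \<in> interior {0..<eta}" "s \<in> {0..<eta}" using r s by auto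
  then have "- dphi r * (s - r) \<le> - phi s - - phi r"
    using convex_on_imp_above_tangent[OF cvx _ _ _ deriv] by simp
  then show ?thesis by (simp add: algebra_simps)
qed

text \<open>A desingularizing function is increasing, since its derivative is positive.\<close>

lemma desing_mono:
  assumes ds: "desing eta phi dphi" and "0 \<le> s" "s \<le> r" "r < eta"
  shows "phi s \<le> phi r"
proof (cases "s = r")
  case False
  then have "s < r" using assms(3) by linarith
  have "{s..r} \<subseteq> {0..<eta}" using assms(2,4) by auto
  then have "continuous_on {s..r} phi"
    using ds unfolding desing_def by (meson continuous_on_subset)
  moreover have "\<exists>z. DERIV phi y :> z \<and> 0 < z" if "s < y" "y < r" for y
  proof -
    have "0 < y" "y < eta" using that assms(2,4) by linarith+
    then show ?thesis using desing_deriv_pos[OF ds] by blast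
  qed
  ultimately have "phi s < phi r" using DERIV_pos_imp_increasing_open[OF \<open>s < r\<close>] by blast
  then show ?thesis by simp
qed simp

lemma two_le_sum_of_sq_le_prod:
  fixes t u v :: real
  assumes "t\<^sup>2 \<le> u * v" "0 \<le> u" "0 \<le> v"
  shows "2 * t \<le> u + v"
proof -
  have "t \<le> sqrt (u * v)" using assms(1) by (rule real_le_rsqrt)
  also have "\<dots> \<le> (u + v) / 2" using assms(2,3) by (rule arith_geo_mean_sqrt)
  finally show ?thesis by simp
qed

lemma slope_bounds_combine:
  fixes L :: ereal
  assumes "ereal d * L \<ge> 1" "d > 0" "ereal b * L \<le> ereal C" "b > 0"
  shows "b \<le> C * d"
proof (cases L)
  case (real l)
  then have "d * l \<ge> 1" "b * l \<le> C" using assms(1,3) by simp_all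
  have "b \<le> b * (d * l)" using \<open>d * l \<ge> 1\<close> assms(4) by simp
  also have "\<dots> = (b * l) * d" by simp
  also have "\<dots> \<le> C * d" using \<open>b * l \<le> C\<close> assms(2) by simp
  finally show ?thesis .
qed (use assms in simp_all)

lemma norm_le_telescope:
  fixes x :: "nat \<Rightarrow> 'a::real_normed_vector"
  shows "norm (x n - y) \<le> norm (x 0 - y) + (\<Sum>k<n. norm (x (Suc k) - x k))"
proof -
  have "x n - y = (x 0 - y) + (\<Sum>k<n. x (Suc k) - x k)"
    by (simp add: sum_lessThan_telescope)
  then have "norm (x n - y) \<le> norm (x 0 - y) + norm (\<Sum>k<n. x (Suc k) - x k)"
    by (metis norm_triangle_ineq)
  also have "\<dots> \<le> norm (x 0 - y) + (\<Sum>k<n. norm (x (Suc k) - x k))"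
    by (simp add: norm_sum)
  finally show ?thesis .
qed

lemma ereal_antimono_finite:
  fixes g :: "nat \<Rightarrow> ereal"
  assumes "\<And>k. g (Suc k) \<le> g k" "\<And>k. g k \<noteq> -\<infinity>" "\<bar>g 0\<bar> \<noteq> \<infinity>"
  shows "\<bar>g k\<bar> \<noteq> \<infinity>"
proof (induction k)
  case (Suc k)
  then have "g (Suc k) \<noteq> \<infinity>" using assms(1)[of k] by auto
  then show ?case using assms(2)[of "Suc k"] by (cases "g (Suc k)") auto
qed (use assms(3) in simp)

text \<open>The step estimate stated purely for real numbers: r and r' are consecutive
  gaps, t the new step, a its sufficient-decrease constant, and b the
  relative-error constant bounded through the slope inequality by u * phi'(r).\<close>

lemma desing_step_estimate:
  fixes a b r r' t u M :: real
  assumes ds: "desing eta phi dphi"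
    and gaps: "0 \<le> r'" "r < eta"
    and descent: "a * t\<^sup>2 \<le> r - r'" "0 < a"
    and slope: "0 < r \<Longrightarrow> b \<le> u * dphi r" "0 < b"
    and u: "0 \<le> u" and M: "1 / (a * b) \<le> M"
  shows "2 * t \<le> u + M * (phi r - phi r')"
proof (cases "r = 0")
  case True
  have "a * t\<^sup>2 \<ge> 0" using descent(2) by simp
  then have "r' = 0" "a * t\<^sup>2 = 0" using descent(1) True gaps(1) by linarith+
  then have "t = 0" using descent(2) by simp
  then show ?thesis using u \<open>r' = 0\<close> True by simp
next
  case False
  have "a * t\<^sup>2 \<ge> 0" using descent(2) by simp
  then have r: "0 < r" and r': "r' < eta" using False descent(1) gaps by linarith+
  define Dphi where "Dphi = phi r - phi r'"
  have dpos: "dphi r > 0" using desing_deriv_pos(2)[OF ds r gaps(2)] .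
  have "dphi r * (a * t\<^sup>2) \<le> dphi r * (r - r')"
    using descent(1) dpos by simp
  also have "\<dots> \<le> Dphi"
    using desing_tangent[OF ds r gaps(2) gaps(1) r'] unfolding Dphi_def
    by (simp add: algebra_simps)
  finally have decrease: "dphi r * (a * t\<^sup>2) \<le> Dphi" .
  have Dphi: "0 \<le> Dphi"
    using decrease dpos descent(2) by (meson order_trans less_imp_le mult_nonneg_nonneg zero_le_power2)
  have ab: "0 < a * b" using descent(2) slope(2) by simp
  have "(a * b) * t\<^sup>2 = b * (a * t\<^sup>2)" by (simp add: mult_ac)
  also have "\<dots> \<le> (u * dphi r) * (a * t\<^sup>2)"
    using slope(1)[OF r] descent(2) by (intro mult_right_mono) simp_all
  also have "\<dots> \<le> u * Dphi"
    using mult_left_mono[OF decrease u] by (simp add: mult.assoc)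
  finally have "t\<^sup>2 \<le> u * Dphi * (1 / (a * b))"
    using ab by (simp add: field_simps)
  also have "\<dots> \<le> u * Dphi * M"
    using mult_left_mono[OF M, of "u * Dphi"] u Dphi by simp
  finally have sq: "t\<^sup>2 \<le> u * (M * Dphi)" by (simp add: mult_ac)
  have MDphi: "0 \<le> M * Dphi"
    using M ab Dphi by (meson divide_pos_pos less_le_trans less_imp_le mult_nonneg_nonneg zero_less_one)
  have "2 * t \<le> u + M * Dphi" by (rule two_le_sum_of_sq_le_prod[OF sq u MDphi])
  then show ?thesis unfolding Dphi_def .
qed

text \<open>The hypotheses of Theorem 8 that the estimate depends on.\<close>

locale kl_descent =
  fixes f :: "'a::real_inner \<Rightarrow> ereal" and xs :: 'a and x :: "nat \<Rightarrow> 'a"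
    and a b eps :: "nat \<Rightarrow> real" and eta delta rho :: real and phi dphi :: "real \<Rightarrow> real"
  assumes proper: "proper_fun f"
    and KL: "KL_at f xs eta delta phi dphi"
    and H1: "\<And>k. a k > 0 \<and> f (x (Suc k)) + ereal (a k * (norm (x (Suc k) - x k))\<^sup>2) \<le> f (x k)"
    and H2: "\<And>k. b (Suc k) > 0 \<and> eps (Suc k) \<ge> 0 \<and>
               ereal (b (Suc k)) * lazy_slope f (x (Suc k)) \<le> ereal (norm (x (Suc k) - x k) + eps (Suc k))"
    and M_bdd: "bdd_above ((\<lambda>k. 1 / (a k * b k)) ` {1..})"
    and eps_summable: "summable (\<lambda>k. eps (Suc k))"
    and rho_delta: "rho < delta"
    and S_i: "\<And>k. (\<forall>i\<le>k. x i \<in> Gamma_under f xs eta rho) \<Longrightarrow> x (Suc k) \<in> Gamma_under f xs eta delta"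
    and S_ii: "x 0 \<in> Gamma_set f xs eta rho"
      "norm (xs - x 0) + 2 * sqrt ((real_of_ereal (f (x 0)) - real_of_ereal (f xs)) / a 0)
         + (SUP k\<in>{1..}. 1 / (a k * b k)) * phi (real_of_ereal (f (x 0)) - real_of_ereal (f xs))
         + (\<Sum>i. eps (Suc i)) < rho"
begin

definition M :: real where "M = (SUP k\<in>{1..}. 1 / (a k * b k))"

definition gap :: "nat \<Rightarrow> real" where
  "gap k = real_of_ereal (f (x k)) - real_of_ereal (f xs)"

definition step :: "nat \<Rightarrow> real" where "step k = norm (x (Suc k) - x k)"

lemma desing: "desing eta phi dphi"
  using KL unfolding KL_at_def by blast

lemma M_upper: "1 \<le> k \<Longrightarrow> 1 / (a k * b k) \<le> M"
  unfolding M_def using M_bdd by (intro cSUP_upper) auto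

lemma f_xs_finite: "f xs = ereal (real_of_ereal (f xs))"
  using KL unfolding KL_at_def by (cases "f xs") auto

text \<open>The values along the sequence are finite: they start finite (x 0 lies in
  the KL region), decrease by H1 and are never minus infinity by properness.\<close>

lemma f_x_finite: "f (x k) = ereal (real_of_ereal (f (x k)))"
proof -
  have "f xs < f (x 0)" "f (x 0) < f xs + ereal eta"
    using S_ii(1) unfolding Gamma_set_def by auto
  then have start: "\<bar>f (x 0)\<bar> \<noteq> \<infinity>" using f_xs_finite by auto
  have decreasing: "f (x (Suc k)) \<le> f (x k)" for k
  proof -
    have "0 \<le> ereal (a k * (norm (x (Suc k) - x k))\<^sup>2)" using H1[of k] by simp
    then show ?thesis using H1[of k] by (metis ereal_le_add_self order_trans)
  qed
  have not_minf: "f (x k) \<noteq> -\<infinity>" for k using proper unfolding proper_fun_def by blast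
  have "\<bar>f (x k)\<bar> \<noteq> \<infinity>"
    by (rule ereal_antimono_finite[of "\<lambda>k. f (x k)", OF decreasing not_minf start])
  then show ?thesis by (cases "f (x k)") auto
qed

lemma gap_decrease: "a k * (step k)\<^sup>2 \<le> gap k - gap (Suc k)"
proof -
  obtain u v where u: "f (x k) = ereal u" and v: "f (x (Suc k)) = ereal v"
    using f_x_finite by blast
  have "v + a k * (step k)\<^sup>2 \<le> u" using H1[of k] unfolding u v step_def by simp
  then show ?thesis unfolding gap_def u v by simp
qed

lemma Gamma_under_iff:
  "x k \<in> Gamma_under f xs eta R \<longleftrightarrow> norm (x k - xs) < R \<and> 0 \<le> gap k \<and> gap k < eta"
proof -
  obtain u c where "f (x k) = ereal u" "f xs = ereal c" using f_x_finite f_xs_finite by blast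
  then show ?thesis unfolding Gamma_under_def gap_def by auto
qed

lemma Gamma_set_iff:
  "x k \<in> Gamma_set f xs eta R \<longleftrightarrow> norm (x k - xs) < R \<and> 0 < gap k \<and> gap k < eta"
proof -
  obtain u c where "f (x k) = ereal u" "f xs = ereal c" using f_x_finite f_xs_finite by blast
  then show ?thesis unfolding Gamma_set_def gap_def by auto
qed

text \<open>The KL inequality and the relative error condition H2 together bound b.\<close>

lemma b_bound:
  assumes "x (Suc j) \<in> Gamma_set f xs eta delta"
  shows "b (Suc j) \<le> (step j + eps (Suc j)) * dphi (gap (Suc j))"
proof (rule slope_bounds_combine)
  show "1 \<le> ereal (dphi (gap (Suc j))) * lazy_slope f (x (Suc j))"
    using KL assms unfolding KL_at_def gap_def by blast
  show "0 < dphi (gap (Suc j))"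
    using assms desing_deriv_pos(2)[OF desing] unfolding Gamma_set_iff by blast
qed (use H2[of j] in \<open>auto simp: step_def\<close>)

lemma one_step:
  assumes "x (Suc j) \<in> Gamma_under f xs eta rho" "x (Suc (Suc j)) \<in> Gamma_under f xs eta delta"
  shows "2 * step (Suc j)
           \<le> step j + M * (phi (gap (Suc j)) - phi (gap (Suc (Suc j)))) + eps (Suc j)"
proof -
  have "2 * step (Suc j)
          \<le> (step j + eps (Suc j)) + M * (phi (gap (Suc j)) - phi (gap (Suc (Suc j))))"
  proof (rule desing_step_estimate[OF desing])
    show "0 \<le> gap (Suc (Suc j))" "gap (Suc j) < eta"
      using assms by (simp_all add: Gamma_under_iff)
    show "a (Suc j) * (step (Suc j))\<^sup>2 \<le> gap (Suc j) - gap (Suc (Suc j))"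
      by (rule gap_decrease)
    show "0 < a (Suc j)" "0 < b (Suc j)" "0 \<le> step j + eps (Suc j)"
      using H1[of "Suc j"] H2[of j] by (simp_all add: step_def)
    show "1 / (a (Suc j) * b (Suc j)) \<le> M" by (rule M_upper) simp
    show "0 < gap (Suc j) \<Longrightarrow> b (Suc j) \<le> (step j + eps (Suc j)) * dphi (gap (Suc j))"
      using assms(1) rho_delta by (intro b_bound) (auto simp: Gamma_under_iff Gamma_set_iff)
  qed
  then show ?thesis by simp
qed

lemma M_nonneg: "0 \<le> M"
proof -
  have "0 < 1 / (a 1 * b 1)" using H1[of 1] H2[of 0] by simp
  then show ?thesis using M_upper[of 1] by linarith
qed

lemma initial_gaps: "0 \<le> gap 1" "gap 1 \<le> gap 0" "gap 0 < eta"
proof -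
  have "x 1 \<in> Gamma_under f xs eta delta"
    using S_i[of 0] S_ii(1) by (simp add: Gamma_under_iff Gamma_set_iff)
  then show "0 \<le> gap 1" by (simp add: Gamma_under_iff)
  have "0 \<le> a 0 * (step 0)\<^sup>2" using H1[of 0] by simp
  then show "gap 1 \<le> gap 0" using gap_decrease[of 0] by simp
  show "gap 0 < eta" using S_ii(1) by (simp add: Gamma_set_iff)
qed

lemma first_step: "step 0 \<le> sqrt (gap 0 / a 0)"
proof -
  have "a 0 * (step 0)\<^sup>2 \<le> gap 0"
    using gap_decrease[of 0] initial_gaps(1) by simp
  then have "(step 0)\<^sup>2 \<le> gap 0 / a 0" using H1[of 0] by (simp add: field_simps)
  then show ?thesis by (rule real_le_rsqrt)
qed

text \<open>The telescoped estimate up to K keeps the next iterate inside the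
  rho-ball: this is where the smallness condition S(ii) enters.\<close>

lemma next_iterate_close:
  assumes bound: "(\<Sum>k=1..K. step k) + step K
                   \<le> step 0 + M * (phi (gap 1) - phi (gap (Suc K))) + (\<Sum>k=1..K. eps k)"
    and near: "x (Suc K) \<in> Gamma_under f xs eta delta"
  shows "norm (x (Suc K) - xs) < rho"
proof -
  have "0 \<le> phi (gap (Suc K))"
    using near by (intro desing_nonneg[OF desing]) (simp_all add: Gamma_under_iff)
  then have "phi (gap 1) - phi (gap (Suc K)) \<le> phi (gap 0)"
    using desing_mono[OF desing initial_gaps] by linarith
  then have phi_part: "M * (phi (gap 1) - phi (gap (Suc K))) \<le> M * phi (gap 0)"
    using M_nonneg by (rule mult_left_mono)
  have "(\<Sum>k=1..K. eps k) = (\<Sum>i<K. eps (Suc i))"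
    using sum.atLeast1_atMost_eq[of eps K] by simp
  also have "\<dots> \<le> (\<Sum>i. eps (Suc i))"
    using H2 by (intro sum_le_suminf[OF eps_summable]) auto
  finally have eps_part: "(\<Sum>k=1..K. eps k) \<le> (\<Sum>i. eps (Suc i))" .
  have "norm (x (Suc K) - xs) \<le> norm (x 0 - xs) + (\<Sum>k<Suc K. step k)"
    using norm_le_telescope[of x "Suc K" xs] unfolding step_def .
  also have "\<dots> = norm (x 0 - xs) + (step 0 + (\<Sum>k=1..K. step k))"
    unfolding sum.lessThan_Suc_shift sum.atLeast1_atMost_eq[of step K, folded One_nat_def] ..
  also have "\<dots> \<le> norm (xs - x 0) + 2 * sqrt (gap 0 / a 0) + M * phi (gap 0) + (\<Sum>i. eps (Suc i))"
  proof -
    have "0 \<le> step K" by (simp add: step_def)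
    then show ?thesis
      using bound phi_part eps_part first_step norm_minus_commute[of "x 0" xs] by linarith
  qed
  also have "\<dots> < rho" using S_ii(2) by (simp add: M_def gap_def)
  finally show ?thesis .
qed

lemma trapped_and_bounded:
  "(\<forall>i\<le>K. x i \<in> Gamma_under f xs eta rho) \<and>
   (\<Sum>k=1..K. step k) + step K \<le> step 0 + M * (phi (gap 1) - phi (gap (Suc K))) + (\<Sum>k=1..K. eps k)"
proof (induction K)
  case 0
  show ?case using S_ii(1) by (simp add: Gamma_under_iff Gamma_set_iff)
next
  case (Suc K)
  then have inside: "\<forall>i\<le>K. x i \<in> Gamma_under f xs eta rho"
    and bound: "(\<Sum>k=1..K. step k) + step K
                  \<le> step 0 + M * (phi (gap 1) - phi (gap (Suc K))) + (\<Sum>k=1..K. eps k)"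
    by auto
  have near: "x (Suc K) \<in> Gamma_under f xs eta delta" using S_i inside by blast
  then have "x (Suc K) \<in> Gamma_under f xs eta rho"
    using next_iterate_close[OF bound] by (simp add: Gamma_under_iff)
  then have inside': "\<forall>i\<le>Suc K. x i \<in> Gamma_under f xs eta rho"
    using inside le_Suc_eq by auto
  then have "x (Suc (Suc K)) \<in> Gamma_under f xs eta delta" using S_i by blast
  then have "2 * step (Suc K)
               \<le> step K + M * (phi (gap (Suc K)) - phi (gap (Suc (Suc K)))) + eps (Suc K)"
    using one_step inside' by blast
  moreover have "(\<Sum>k=1..Suc K. step k) = (\<Sum>k=1..K. step k) + step (Suc K)"
    and "(\<Sum>k=1..Suc K. eps k) = (\<Sum>k=1..K. eps k) + eps (Suc K)" by simp_all
  moreover have "M * (phi (gap 1) - phi (gap (Suc (Suc K))))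
      = M * (phi (gap 1) - phi (gap (Suc K))) + M * (phi (gap (Suc K)) - phi (gap (Suc (Suc K))))"
    by (simp add: algebra_simps)
  ultimately have "(\<Sum>k=1..Suc K. step k) + step (Suc K)
      \<le> step 0 + M * (phi (gap 1) - phi (gap (Suc (Suc K)))) + (\<Sum>k=1..Suc K. eps k)"
    using bound by linarith
  with inside' show ?case by (rule conjI)
qed

end

theorem mainTheorem8:
  fixes f :: "'a::{real_inner, complete_space} \<Rightarrow> ereal"
    and xs :: 'a and x :: "nat \<Rightarrow> 'a"
    and a b eps :: "nat \<Rightarrow> real"
    and eta delta rho abar :: real and phi dphi :: "real \<Rightarrow> real"
  assumes proper: "proper_fun f" and lsc: "lsc_fun f"
    and KL: "KL_at f xs eta delta phi dphi"
    and H1: "\<And>k. a k > 0 \<and> f (x (Suc k)) + ereal (a k * (norm (x (Suc k) - x k))\<^sup>2) \<le> f (x k)"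
    and H2: "\<And>k. b (Suc k) > 0 \<and> eps (Suc k) \<ge> 0 \<and>
               ereal (b (Suc k)) * lazy_slope f (x (Suc k)) \<le> ereal (norm (x (Suc k) - x k) + eps (Suc k))"
    and H3i: "abar > 0" "\<And>k. a k \<ge> abar"
    and H3ii: "\<not> summable (\<lambda>k. b (Suc k))"
    and H3iii: "bdd_above ((\<lambda>k. 1 / (a k * b k)) ` {1..})"
    and H3iv: "summable (\<lambda>k. eps (Suc k))"
    and S_rho: "0 < rho" "rho < delta"
    and S_i: "\<And>k. (\<forall>i\<le>k. x i \<in> Gamma_under f xs eta rho) \<Longrightarrow> x (Suc k) \<in> Gamma_under f xs eta delta"
    and S_ii: "x 0 \<in> Gamma_set f xs eta rho"
      "norm (xs - x 0) + 2 * sqrt ((real_of_ereal (f (x 0)) - real_of_ereal (f xs)) / a 0)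
         + (SUP k\<in>{1..}. 1 / (a k * b k)) * phi (real_of_ereal (f (x 0)) - real_of_ereal (f xs))
         + (\<Sum>i. eps (Suc i)) < rho"
  shows "\<forall>K\<ge>1. x K \<in> Gamma_under f xs eta rho \<and>
     (\<Sum>k=1..K. norm (x (Suc k) - x k)) + norm (x (Suc K) - x K)
       \<le> norm (x 1 - x 0)
         + (SUP k\<in>{1..}. 1 / (a k * b k)) *
             (phi (real_of_ereal (f (x 1)) - real_of_ereal (f xs))
              - phi (real_of_ereal (f (x (Suc K))) - real_of_ereal (f xs)))
         + (\<Sum>k=1..K. eps k)"
proof -
  interpret kl_descent f xs x a b eps eta delta rho phi dphi
    by (unfold_locales; fact assms)
  have "x K \<in> Gamma_under f xs eta rho \<and>
        (\<Sum>k=1..K. step k) + step K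
          \<le> step 0 + M * (phi (gap 1) - phi (gap (Suc K))) + (\<Sum>k=1..K. eps k)" for K
    using trapped_and_bounded[of K] by (meson order_refl)
  then show ?thesis unfolding M_def gap_def step_def[abs_def] One_nat_def by blast
qed

end
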